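(* Let $g\colon X\to\mathcal Q^{\vartriangle}$ be improper, closed and convex. Then for every $x\in X$, $$g(x)=\bigcap\{S_{(\hat x^*,r,z^* )}(x):\ (\hat x^*,r,z^* )\in\hat X^*\times\mathbb R\times(C^-\setminus\{0\}),\ S_{(\hat x^*,r,z^* )}(y)\supseteq g(y)\ \forall y\in X\}.$$ In particular, if $g\not\equiv Z$, then there exist $x^*\in X^*\setminus\{0\}$, $z^*\in C^-\setminus\{0\}$ and $r\in\mathbb R$ such that $S_{(\hat x^*,r,z^* )}(x)\supseteq g(x)$ for all $x\in X$.
   Context: $X,Z$ are separated locally convex spaces with duals $X^*,Z^*$; $C\subseteq Z$ is a convex cone with $0\in C$, $C^-=\{z^*\in Z^*: z^*(z)\leq0\ \forall z\in C\}$, assumed $\neq\{0\}$. $\mathcal Q^{\vartriangle}=\{A\subseteq Z: A=\operatorname{cl}\operatorname{co}(A+C)\}$ (contains $\emptyset$). For $g\colon X\to\mathcal Q^{\vartriangle}$: $\operatorname{gr}g=\{(x,z): z\in g(x)\}$, $\operatorname{dom}g=\{x: g(x)\neq\emptyset\}$; $g$ is convex (closed) iff $\operatorname{gr}g$ is convex (closed); $g$ is proper if $\operatorname{dom}g\neq\emptyset$ and $g(x)\neq Z$ for all $x$, improper otherwise. For $x^*\in X^*$, $r\in\mathbb R$: $x^*_r(x)=x^*(x)-r$, $\hat x^*_r(x)=-\infty$ if $x^*(x)\leq r$ and $+\infty$ otherwise; $\hat x^*=\hat x^*_0$, $\hat X^*=\{\hat x^*: x^*\in X^*\}$, $X^{\vartriangle}=X^*\cup\hat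 X^*$; $\xi_r=x^*_r$ if $\xi=x^*$ and $\xi_r=\hat x^*_r$ if $\xi=\hat x^*$. For $\xi\in X^{\vartriangle}$, $r\in\mathbb R$, $z^*\in C^-$, the conaffine function $S_{(\xi,r,z^* )}\colon X\to\mathcal Q^{\vartriangle}$ is $S_{(\xi,r,z^* )}(x)=\{z\in Z: \xi_r(x)\leq -z^*(z)\}$ (with the usual order on $\overline{\mathbb R}=\mathbb R\cup\{\pm\infty\}$). *)

theory Defs
  imports "HOL-Analysis.Analysis"
begin

text \<open>Separated locally convex (real) topological vector space structure on a type.
  Separation is imposed through the class t2_space in the statement.\<close>
definition lcs :: "('a::{real_vector,topological_space}) itself \<Rightarrow> bool" where
  "lcs _ \<longleftrightarrow>
     continuous_on UNIV (\<lambda>p::'a \<times> 'a. fst p + snd p) \<and>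
     continuous_on UNIV (\<lambda>p::real \<times> 'a. fst p *\<^sub>R snd p) \<and>
     (\<forall>U::'a set. open U \<and> 0 \<in> U \<longrightarrow> (\<exists>V. open V \<and> convex V \<and> 0 \<in> V \<and> V \<subseteq> U))"

definition dual_space :: "('a::{real_vector,topological_space} \<Rightarrow> real) set" where
  "dual_space = {f. linear f \<and> continuous_on UNIV f}"

definition neg_dual_cone :: "('a::{real_vector,topological_space}) set \<Rightarrow> ('a \<Rightarrow> real) set" where
  "neg_dual_cone C = {zs \<in> dual_space. \<forall>z\<in>C. zs z \<le> 0}"

definition Qtri :: "('a::{real_vector,topological_space}) set \<Rightarrow> 'a set set" where
  "Qtri C = {A. A = closure (convex hull {a + c | a c. a \<in> A \<and> c \<in> C})}"

definition graph :: "('x \<Rightarrow> 'z set) \<Rightarrow> ('x \<times> 'z) set" where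
  "graph g = {(x, z). z \<in> g x}"

definition dom_sv :: "('x \<Rightarrow> 'z set) \<Rightarrow> 'x set" where
  "dom_sv g = {x. g x \<noteq> {}}"

definition proper_sv :: "('x \<Rightarrow> 'z set) \<Rightarrow> bool" where
  "proper_sv g \<longleftrightarrow> dom_sv g \<noteq> {} \<and> (\<forall>x. g x \<noteq> UNIV)"

text \<open>Elements of X-triangle = X^* \<union> hat X^*: Lin x* is x*, Hat x* is hat x*.\<close>
datatype 'x dual_tri = Lin "'x \<Rightarrow> real" | Hat "'x \<Rightarrow> real"

fun xi_r :: "'x dual_tri \<Rightarrow> real \<Rightarrow> 'x \<Rightarrow> ereal" where
  "xi_r (Lin xs) r x = ereal (xs x - r)"
| "xi_r (Hat xs) r x = (if xs x \<le> r then -\<infinity> else \<infinity>)"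

definition conaff :: "'x dual_tri \<Rightarrow> real \<Rightarrow> ('z \<Rightarrow> real) \<Rightarrow> 'x \<Rightarrow> 'z set" where
  "conaff xi r zs x = {z. xi_r xi r x \<le> ereal (- zs z)}"

end

theory Submission
  imports Defs
begin

text \<open>
  An improper set-valued map g with closed convex graph is very degenerate: by a
  recession argument along the graph, every value is either empty or all of Z.  Hence g
  is encoded by its domain D, which is closed and convex, and the conaffine minorants
  S_(hat x*, r, z*) (whose values are Z or empty according as x* y \<le> r or not) are exactly
  the closed half-spaces of X containing D.  The theorem is therefore the statement that
  a closed convex set is the intersection of the closed half-spaces containing it, plus the
  existence of a non-zero continuous functional when D is empty.
\<close>

subsection \<open>Sublinear functionals\<close>

definition sublin :: "('a::real_vector \<Rightarrow> real) \<Rightarrow> bool" where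
  "sublin p \<longleftrightarrow> (\<forall>x y. p (x + y) \<le> p x + p y) \<and> (\<forall>a x. a \<ge> 0 \<longrightarrow> p (a *\<^sub>R x) = a * p x)"

lemma sublin_add: "sublin p \<Longrightarrow> p (x + y) \<le> p x + p y"
  unfolding sublin_def by blast

lemma sublin_scale: "sublin p \<Longrightarrow> a \<ge> 0 \<Longrightarrow> p (a *\<^sub>R x) = a * p x"
  unfolding sublin_def by blast

lemma sublin_0: "sublin p \<Longrightarrow> p 0 = 0"
  using sublin_scale[of p 0 0] by simp

text \<open>Lower bounds of a sublinear functional by its reflection; they keep all the infima
  below finite.\<close>
lemma sublin_lb: assumes "sublin p" shows "- p (-x) \<le> p (x + y) - p y"
  using sublin_add[OF assms, of "x + y" "-x"] by simp

lemma sublin_neg: "sublin p \<Longrightarrow> - p (-x) \<le> p x"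
  using sublin_lb[of p x 0] by (simp add: sublin_0)

text \<open>Positive homogeneity follows from the one-sided inequality for all positive scalars;
  each infimum construction below only yields this inequality directly.\<close>
lemma pos_hom_from_le:
  fixes f :: "'a::real_vector \<Rightarrow> real"
  assumes le: "\<And>a x. a > 0 \<Longrightarrow> f (a *\<^sub>R x) \<le> a * f x" and a: "a \<ge> 0"
  shows "f (a *\<^sub>R x) = a * f x"
proof (cases "a = 0")
  case True
  have "f 0 \<le> 2 * f 0" "f 0 \<le> (1/2) * f 0" using le[of 2 0] le[of "1/2" 0] by simp_all
  then show ?thesis using True by simp
next
  case False
  then have a': "a > 0" using a by simp
  have "f x = f (inverse a *\<^sub>R (a *\<^sub>R x))" using a' by simp
  also have "\<dots> \<le> inverse a * f (a *\<^sub>R x)" using a' by (intro le) simp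
  finally have "a * f x \<le> f (a *\<^sub>R x)" using a' by (simp add: field_simps)
  then show ?thesis using le[OF a', of x] by linarith
qed

lemma sublinI:
  assumes "\<And>x y. p (x + y) \<le> p x + p y" and "\<And>a x. a > 0 \<Longrightarrow> p (a *\<^sub>R x) \<le> a * p x"
  shows "sublin p"
  unfolding sublin_def using assms pos_hom_from_le[of p] by blast

text \<open>Tightening of q in direction y: the largest sublinear functional below q whose value
  at -y is at most -c.  It is the key device forcing a minimal sublinear functional to be
  linear.\<close>
definition tighten :: "('a::real_vector \<Rightarrow> real) \<Rightarrow> 'a \<Rightarrow> real \<Rightarrow> 'a \<Rightarrow> real" where
  "tighten q y c x = Inf ((\<lambda>t. q (x + t *\<^sub>R y) - t * c) ` {0..})"

lemma tighten_props:
  assumes q: "sublin q" and c: "c \<le> q y"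
  shows "sublin (tighten q y c)" "\<And>x. tighten q y c x \<le> q x" "tighten q y c (-y) \<le> -c"
proof -
  have lb: "- q (-x) \<le> q (x + t *\<^sub>R y) - t * c" if "t \<ge> 0" for x t
  proof -
    have "- q (-x) \<le> q (x + t *\<^sub>R y) - q (t *\<^sub>R y)" by (rule sublin_lb[OF q])
    moreover have "q (t *\<^sub>R y) = t * q y" using sublin_scale[OF q that] .
    moreover have "t * c \<le> t * q y" using c that by (simp add: mult_left_mono)
    ultimately show ?thesis by linarith
  qed
  have bdd: "bdd_below ((\<lambda>t. q (x + t *\<^sub>R y) - t * c) ` {0..})" for x
    using lb by (auto intro!: bdd_belowI2)
  have le: "tighten q y c x \<le> q (x + t *\<^sub>R y) - t * c" if "t \<ge> 0" for x t
    unfolding tighten_def using that by (intro cInf_lower[OF _ bdd]) auto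
  have ge: "b \<le> tighten q y c x" if "\<And>t. t \<ge> 0 \<Longrightarrow> b \<le> q (x + t *\<^sub>R y) - t * c" for b x
    unfolding tighten_def using that by (intro cInf_greatest) auto
  show "tighten q y c x \<le> q x" for x using le[of 0 x] by simp
  show "tighten q y c (-y) \<le> -c" using le[of 1 "-y"] by (simp add: sublin_0[OF q])
  show "sublin (tighten q y c)"
  proof (rule sublinI)
    fix x1 x2
    have "tighten q y c (x1 + x2) - (q (x2 + t2 *\<^sub>R y) - t2 * c) \<le> tighten q y c x1"
      if t2: "t2 \<ge> 0" for t2
    proof (rule ge)
      fix t1 :: real assume t1: "t1 \<ge> 0"
      have "tighten q y c (x1 + x2) \<le> q ((x1 + x2) + (t1 + t2) *\<^sub>R y) - (t1 + t2) * c"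
        using t1 t2 by (intro le) simp
      also have "(x1 + x2) + (t1 + t2) *\<^sub>R y = (x1 + t1 *\<^sub>R y) + (x2 + t2 *\<^sub>R y)"
        by (simp add: algebra_simps)
      also have "q \<dots> \<le> q (x1 + t1 *\<^sub>R y) + q (x2 + t2 *\<^sub>R y)" by (rule sublin_add[OF q])
      finally show "tighten q y c (x1 + x2) - (q (x2 + t2 *\<^sub>R y) - t2 * c)
          \<le> q (x1 + t1 *\<^sub>R y) - t1 * c"
        by (simp add: algebra_simps)
    qed
    then have "tighten q y c (x1 + x2) - tighten q y c x1 \<le> tighten q y c x2"
      by (intro ge) (simp add: algebra_simps)
    then show "tighten q y c (x1 + x2) \<le> tighten q y c x1 + tighten q y c x2" by simp
  next
    fix a :: real and x assume a: "a > 0"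
    have "tighten q y c (a *\<^sub>R x) / a \<le> tighten q y c x"
    proof (rule ge)
      fix s :: real assume s: "s \<ge> 0"
      have "tighten q y c (a *\<^sub>R x) \<le> q (a *\<^sub>R x + (a * s) *\<^sub>R y) - (a * s) * c"
        using s a by (intro le) simp
      also have "a *\<^sub>R x + (a * s) *\<^sub>R y = a *\<^sub>R (x + s *\<^sub>R y)" by (simp add: algebra_simps)
      also have "q \<dots> = a * q (x + s *\<^sub>R y)" using sublin_scale[OF q] a by simp
      finally show "tighten q y c (a *\<^sub>R x) / a \<le> q (x + s *\<^sub>R y) - s * c"
        using a by (simp add: field_simps)
    qed
    then show "tighten q y c (a *\<^sub>R x) \<le> a * tighten q y c x" using a by (simp add: field_simps)
  qed
qed

text \<open>A sublinear functional that admits no strictly smaller sublinear functional is linear: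
  tightening it in direction y at level m y forces m (-y) = - m y.\<close>
lemma minimal_sublin_linear:
  assumes m: "sublin m" and min: "\<And>q. sublin q \<Longrightarrow> (\<forall>x. q x \<le> m x) \<Longrightarrow> q = m"
  shows "linear m"
proof -
  have neg: "m (-y) = - m y" for y
  proof -
    note T = tighten_props[OF m order_refl[of "m y"]]
    have "tighten m y (m y) = m" using T(1,2) by (intro min) auto
    then have "m (-y) \<le> - m y" using T(3) by simp
    moreover have "m 0 \<le> m y + m (-y)" using sublin_add[OF m, of y "-y"] by simp
    ultimately show ?thesis using sublin_0[OF m] by linarith
  qed
  have add: "m (x + y) = m x + m y" for x y
    using sublin_add[OF m, of x y] sublin_add[OF m, of "x + y" "-y"] neg[of y] by simp
  have scale: "m (a *\<^sub>R x) = a * m x" for a x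
  proof (cases "a \<ge> 0")
    case True then show ?thesis by (rule sublin_scale[OF m])
  next
    case False
    then have "m ((-a) *\<^sub>R x) = (-a) * m x" by (intro sublin_scale[OF m]) simp
    then show ?thesis using neg[of "(-a) *\<^sub>R x"] by simp
  qed
  show "linear m" by (rule linearI) (simp_all add: add scale)
qed

text \<open>The pointwise infimum of a non-empty chain of sublinear functionals dominated by p is
  again sublinear; it is the lower bound needed for Zorn's lemma.\<close>
lemma chain_inf_sublin:
  fixes p :: "'a::real_vector \<Rightarrow> real"
  assumes ne: "C \<noteq> {}" and sl: "\<And>q. q \<in> C \<Longrightarrow> sublin q"
    and below: "\<And>q x. q \<in> C \<Longrightarrow> q x \<le> p x"
    and chain: "\<And>q1 q2. q1 \<in> C \<Longrightarrow> q2 \<in> C \<Longrightarrow> (\<forall>x. q2 x \<le> q1 x) \<or> (\<forall>x. q1 x \<le> q2 x)"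
  defines "u \<equiv> \<lambda>x. Inf ((\<lambda>q. q x) ` C)"
  shows "sublin u" "\<And>q x. q \<in> C \<Longrightarrow> u x \<le> q x"
proof -
  have bdd: "bdd_below ((\<lambda>q. q x) ` C)" for x
    using sublin_neg[OF sl] below by (intro bdd_belowI2[of _ "- p (-x)"]) (meson neg_le_iff_le order_trans)
  show ule: "u x \<le> q x" if "q \<in> C" for q x unfolding u_def using that bdd by (intro cInf_lower) auto
  have uge: "b \<le> u x" if "\<And>q. q \<in> C \<Longrightarrow> b \<le> q x" for b x
    unfolding u_def using that ne by (intro cInf_greatest) auto
  show "sublin u"
  proof (rule sublinI)
    fix x y
    have "u (x + y) - q2 y \<le> u x" if q2: "q2 \<in> C" for q2
    proof (rule uge)
      fix q1 assume q1: "q1 \<in> C"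
      from chain[OF q1 q2] show "u (x + y) - q2 y \<le> q1 x"
      proof
        assume le: "\<forall>x. q2 x \<le> q1 x"
        have "u (x + y) \<le> q2 x + q2 y" using ule[OF q2] sublin_add[OF sl[OF q2]] by (rule order_trans)
        then show ?thesis using le[rule_format, of x] by linarith
      next
        assume le: "\<forall>x. q1 x \<le> q2 x"
        have "u (x + y) \<le> q1 x + q1 y" using ule[OF q1] sublin_add[OF sl[OF q1]] by (rule order_trans)
        then show ?thesis using le[rule_format, of y] by linarith
      qed
    qed
    then have "u (x + y) - u x \<le> u y" by (intro uge) (simp add: algebra_simps)
    then show "u (x + y) \<le> u x + u y" by simp
  next
    fix a :: real and x assume a: "a > 0"
    have "u (a *\<^sub>R x) / a \<le> u x"
    proof (rule uge)
      fix q assume q: "q \<in> C"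
      have "u (a *\<^sub>R x) \<le> a * q x" using ule[OF q, of "a *\<^sub>R x"] sublin_scale[OF sl[OF q], of a x] a by simp
      then show "u (a *\<^sub>R x) / a \<le> q x" using a by (simp add: field_simps)
    qed
    then show "u (a *\<^sub>R x) \<le> a * u x" using a by (simp add: field_simps)
  qed
qed

lemma hahn_banach_sublin:
  fixes p :: "'a::real_vector \<Rightarrow> real"
  assumes p: "sublin p"
  shows "\<exists>h. linear h \<and> (\<forall>x. h x \<le> p x)"
proof -
  define A where "A = {q. sublin q \<and> (\<forall>x. q x \<le> p x)}"
  define P where "P = (\<lambda>q1 q2 :: 'a \<Rightarrow> real. \<forall>x. q2 x \<le> q1 x)"
  have po: "partial_order_on A (relation_of P A)"
    unfolding partial_order_on_def preorder_on_def refl_on_def trans_def antisym_def relation_of_def P_def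
    by (auto intro: order_trans) (meson antisym ext)
  have chains: "\<exists>u \<in> A. \<forall>q \<in> C. P q u" if C: "C \<in> Chains (relation_of P A)" for C
  proof (cases "C = {}")
    case True then show ?thesis using p by (auto simp: A_def)
  next
    case False
    have CA: "C \<subseteq> A" using C unfolding Chains_def relation_of_def by auto
    obtain q0 where q0: "q0 \<in> C" using False by blast
    have chain: "(\<forall>x. q2 x \<le> q1 x) \<or> (\<forall>x. q1 x \<le> q2 x)" if "q1 \<in> C" "q2 \<in> C" for q1 q2
      using C that unfolding Chains_def relation_of_def P_def by blast
    have sl: "sublin q" "\<And>x. q x \<le> p x" if "q \<in> C" for q using CA that by (auto simp: A_def)
    let ?u = "\<lambda>x. Inf ((\<lambda>q. q x) ` C)"
    have u: "sublin ?u" "\<And>q x. q \<in> C \<Longrightarrow> ?u x \<le> q x"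
      using chain_inf_sublin[of C p] False sl chain by blast+
    have "?u \<in> A"
      unfolding A_def using u(1) u(2)[OF q0] sl(2)[OF q0] by (auto intro: order_trans)
    moreover have "\<forall>q \<in> C. P q ?u" unfolding P_def using u(2) by auto
    ultimately show ?thesis by blast
  qed
  obtain m where mA: "m \<in> A" and mmin: "\<And>q. q \<in> A \<Longrightarrow> P m q \<Longrightarrow> q = m"
    using predicate_Zorn[OF po chains] by blast
  have "linear m"
  proof (rule minimal_sublin_linear)
    show "sublin m" using mA by (simp add: A_def)
    show "q = m" if "sublin q" "\<forall>x. q x \<le> m x" for q
      using that mA by (intro mmin) (auto simp: A_def P_def intro: order_trans)
  qed
  then show ?thesis using mA by (auto simp: A_def)
qed

lemma hahn_banach_point:
  fixes p :: "'a::real_vector \<Rightarrow> real"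
  assumes p: "sublin p" and y: "1 \<le> p y"
  shows "\<exists>h. linear h \<and> (\<forall>x. h x \<le> p x) \<and> 1 \<le> h y"
proof -
  note T = tighten_props[OF p y]
  obtain h where h: "linear h" "\<And>x. h x \<le> tighten p y 1 x" using hahn_banach_sublin[OF T(1)] by blast
  have "h (-y) \<le> -1" using h(2)[of "-y"] T(3) by linarith
  then have "1 \<le> h y" using linear_neg[OF h(1)] by fastforce
  then show ?thesis using h T(2) by (meson order_trans)
qed

text \<open>The class assumption only provides a topology; lcs supplies continuity of the vector
  operations, from which we need affine maps and rays to be continuous.\<close>

lemma lcs_cont_add:
  fixes f g :: "'b::topological_space \<Rightarrow> 'a::{real_vector,topological_space}"
  assumes L: "lcs TYPE('a)" and f: "continuous_on S f" and g: "continuous_on S g"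
  shows "continuous_on S (\<lambda>t. f t + g t)"
proof -
  have c: "continuous_on UNIV (\<lambda>p::'a \<times> 'a. fst p + snd p)" using L unfolding lcs_def by blast
  show ?thesis using continuous_on_compose2[OF c continuous_on_Pair[OF f g]] by simp
qed

lemma lcs_cont_scale:
  fixes f :: "'b::topological_space \<Rightarrow> real" and g :: "'b \<Rightarrow> 'a::{real_vector,topological_space}"
  assumes L: "lcs TYPE('a)" and f: "continuous_on S f" and g: "continuous_on S g"
  shows "continuous_on S (\<lambda>t. f t *\<^sub>R g t)"
proof -
  have c: "continuous_on UNIV (\<lambda>p::real \<times> 'a. fst p *\<^sub>R snd p)" using L unfolding lcs_def by blast
  show ?thesis using continuous_on_compose2[OF c continuous_on_Pair[OF f g]] by simp
qed

lemma lcs_open_affine: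
  fixes b :: "'a::{real_vector,topological_space}"
  assumes L: "lcs TYPE('a)" and U: "open U"
  shows "open {u. c *\<^sub>R u + b \<in> U}"
proof -
  have "continuous_on UNIV (\<lambda>u::'a. c *\<^sub>R u + b)"
    by (intro lcs_cont_add[OF L] lcs_cont_scale[OF L] continuous_on_const continuous_on_id)
  from open_vimage[OF U this] show ?thesis by (simp add: vimage_def)
qed

lemma lcs_open_ray:
  fixes x :: "'a::{real_vector,topological_space}"
  assumes L: "lcs TYPE('a)" and U: "open U"
  shows "open {s::real. s *\<^sub>R x \<in> U}"
proof -
  have "continuous_on UNIV (\<lambda>s::real. s *\<^sub>R x)"
    by (intro lcs_cont_scale[OF L] continuous_on_const continuous_on_id)
  from open_vimage[OF U this] show ?thesis by (simp add: vimage_def)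
qed

lemma lcs_absorb:
  fixes x :: "'a::{real_vector,topological_space}"
  assumes L: "lcs TYPE('a)" and U: "open U" and U0: "0 \<in> U"
  shows "\<exists>s>0. s *\<^sub>R x \<in> U"
proof -
  have "open {s::real. s *\<^sub>R x \<in> U}" by (rule lcs_open_ray[OF L U])
  moreover have "0 \<in> {s::real. s *\<^sub>R x \<in> U}" using U0 by simp
  ultimately obtain e where e: "e > 0" "ball 0 e \<subseteq> {s::real. s *\<^sub>R x \<in> U}"
    using open_contains_ball by blast
  moreover have "e/2 \<in> ball 0 e" using e(1) by (simp add: dist_real_def)
  ultimately have "(e/2) *\<^sub>R x \<in> U" by blast
  then show ?thesis using e(1) by (intro exI[of _ "e/2"]) auto
qed

subsection \<open>The Minkowski functional\<close>

definition mink :: "'a::real_vector set \<Rightarrow> 'a \<Rightarrow> real" where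
  "mink W x = Inf {t. 0 < t \<and> inverse t *\<^sub>R x \<in> W}"

text \<open>The two bounds on the infimum defining mink; the lower one needs the defining set to
  be non-empty, which holds as W is an (absorbing) neighbourhood of 0.\<close>
lemma mink_le:
  assumes "t > 0" "inverse t *\<^sub>R x \<in> W"
  shows "mink W x \<le> t"
  unfolding mink_def using assms by (intro cInf_lower bdd_belowI[of _ 0]) auto

lemma mink_ge:
  fixes W :: "'a::{real_vector,topological_space} set"
  assumes L: "lcs TYPE('a)" and W: "open W" "0 \<in> W"
    and b: "\<And>t. t > 0 \<Longrightarrow> inverse t *\<^sub>R x \<in> W \<Longrightarrow> b \<le> t"
  shows "b \<le> mink W x"
proof -
  obtain s where "s > 0" "s *\<^sub>R x \<in> W" using lcs_absorb[OF L W] by blast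
  then have "inverse s \<in> {t. 0 < t \<and> inverse t *\<^sub>R x \<in> W}" by simp
  then have "{t. 0 < t \<and> inverse t *\<^sub>R x \<in> W} \<noteq> {}" by blast
  then show ?thesis unfolding mink_def using b by (intro cInf_greatest) auto
qed

lemma mink_sublin:
  fixes W :: "'a::{real_vector,topological_space} set"
  assumes L: "lcs TYPE('a)" and W: "open W" "convex W" "0 \<in> W"
  shows "sublin (mink W)"
proof (rule sublinI)
  note ge = mink_ge[OF L W(1) W(3)]
  fix x y
  have sum: "mink W (x + y) \<le> s + t"
    if s: "s > 0" "inverse s *\<^sub>R x \<in> W" and t: "t > 0" "inverse t *\<^sub>R y \<in> W" for s t
  proof (rule mink_le)
    show "s + t > 0" using s t by simp
    have "(s/(s+t)) *\<^sub>R (inverse s *\<^sub>R x) + (t/(s+t)) *\<^sub>R (inverse t *\<^sub>R y) \<in> W"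
      using s t by (intro convexD[OF W(2)]) (simp_all add: add_divide_distrib[symmetric])
    also have "(s/(s+t)) *\<^sub>R (inverse s *\<^sub>R x) + (t/(s+t)) *\<^sub>R (inverse t *\<^sub>R y)
        = inverse (s+t) *\<^sub>R (x + y)"
    proof -
      have c1: "(s/(s+t)) * inverse s = inverse (s+t)" using s t by (simp add: field_simps)
      have c2: "(t/(s+t)) * inverse t = inverse (s+t)" using s t by (simp add: field_simps)
      show ?thesis by (simp only: scaleR_scaleR c1 c2 scaleR_add_right)
    qed
    finally show "inverse (s + t) *\<^sub>R (x + y) \<in> W" .
  qed
  have "mink W (x + y) - t \<le> mink W x" if t: "t > 0" "inverse t *\<^sub>R y \<in> W" for t
    by (rule ge) (use sum t in force)
  then have "mink W (x + y) - mink W x \<le> mink W y" by (intro ge) force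
  then show "mink W (x + y) \<le> mink W x + mink W y" by simp
next
  fix a :: real and x assume a: "a > 0"
  have "mink W (a *\<^sub>R x) / a \<le> mink W x"
  proof (rule mink_ge[OF L W(1) W(3)])
    fix t assume t: "t > 0" "inverse t *\<^sub>R x \<in> W"
    have eq: "inverse (a*t) *\<^sub>R (a *\<^sub>R x) = inverse t *\<^sub>R x" using a by (simp add: field_simps)
    have "inverse (a*t) *\<^sub>R (a *\<^sub>R x) \<in> W" unfolding eq by (rule t(2))
    then have "mink W (a *\<^sub>R x) \<le> a * t" using t a by (intro mink_le) auto
    then show "mink W (a *\<^sub>R x) / a \<le> t" using a by (simp add: field_simps)
  qed
  then show "mink W (a *\<^sub>R x) \<le> a * mink W x" using a by (simp add: field_simps)
qed

text \<open>W is the strict sub-level set of its Minkowski functional at 1: openness gives room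
  beyond each point of W, convexity pulls points with gauge below 1 back into W.\<close>
lemma mink_less_1_iff:
  fixes W :: "'a::{real_vector,topological_space} set"
  assumes L: "lcs TYPE('a)" and W: "open W" "convex W" "0 \<in> W"
  shows "x \<in> W \<longleftrightarrow> mink W x < 1"
proof
  assume x: "x \<in> W"
  have "open {s::real. s *\<^sub>R x \<in> W}" by (rule lcs_open_ray[OF L W(1)])
  moreover have "1 \<in> {s::real. s *\<^sub>R x \<in> W}" using x by simp
  ultimately obtain e where e: "e > 0" "ball 1 e \<subseteq> {s::real. s *\<^sub>R x \<in> W}"
    using open_contains_ball by blast
  let ?s = "1 + e/2"
  have "?s \<in> ball 1 e" using e by (auto simp: dist_real_def)
  then have "?s *\<^sub>R x \<in> W" using e by auto
  then have "mink W x \<le> inverse ?s" using e by (intro mink_le) auto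
  also have "inverse ?s < 1" using e by (simp add: field_simps)
  finally show "mink W x < 1" .
next
  assume m: "mink W x < 1"
  have "\<not> 1 \<le> mink W x" using m by simp
  then obtain t where t: "t > 0" "inverse t *\<^sub>R x \<in> W" "t < 1"
    using mink_ge[OF L W(1) W(3), of x 1] by force
  then have "t *\<^sub>R (inverse t *\<^sub>R x) + (1 - t) *\<^sub>R 0 \<in> W"
    using W by (intro convexD) auto
  then show "x \<in> W" using t by simp
qed

text \<open>A linear functional dominated by the Minkowski functional of an open convex
  neighbourhood of 0 is bounded by 1 on the open set W \<inter> -W, hence continuous.\<close>
lemma mink_dominated_continuous:
  fixes W :: "'a::{real_vector,topological_space} set"
  assumes L: "lcs TYPE('a)" and W: "open W" "convex W" "0 \<in> W"
    and h: "linear h" and hb: "\<And>x. h x \<le> mink W x"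
  shows "continuous_on UNIV h"
proof -
  have bound: "\<bar>h v\<bar> < 1" if "v \<in> W" "-v \<in> W" for v
  proof -
    have "h v < 1" "h (-v) < 1" using hb mink_less_1_iff[OF L W] that by (meson le_less_trans)+
    then show ?thesis using linear_neg[OF h, of v] by linarith
  qed
  have "open (h -` B)" if B: "open B" for B
  proof (subst open_subopen, intro ballI)
    fix x assume x: "x \<in> h -` B"
    then obtain e where e: "e > 0" "\<And>y. dist y (h x) < e \<Longrightarrow> y \<in> B"
      using B unfolding open_dist by auto
    define T where "T = {u. (1/e) *\<^sub>R u + (-(1/e) *\<^sub>R x) \<in> W} \<inter> {u. (-(1/e)) *\<^sub>R u + ((1/e) *\<^sub>R x) \<in> W}"
    have "open T" unfolding T_def by (intro open_Int lcs_open_affine[OF L W(1)])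
    moreover have "x \<in> T" unfolding T_def using W(3) by simp
    moreover have "T \<subseteq> h -` B"
    proof
      fix u assume u: "u \<in> T"
      define v where "v = (1/e) *\<^sub>R u + (-(1/e) *\<^sub>R x)"
      have "-v = (-(1/e)) *\<^sub>R u + ((1/e) *\<^sub>R x)" unfolding v_def
        by (simp only: minus_add_distrib scaleR_minus_left minus_minus)
      then have "v \<in> W" "-v \<in> W" using u unfolding T_def v_def by auto
      then have "\<bar>h v\<bar> < 1" by (rule bound)
      moreover have "h v = (h u - h x) / e"
      proof -
        have "h v = (1/e) * h u + (-(1/e)) * h x"
          unfolding v_def using h by (simp add: linear_diff linear_cmul)
        then show ?thesis by (simp add: diff_divide_distrib)
      qed
      ultimately have "\<bar>h u - h x\<bar> / e < 1" using e(1) by (simp only: abs_divide abs_of_pos)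
      then have "dist (h u) (h x) < e" using e(1) by (simp add: dist_real_def pos_divide_less_eq)
      then show "u \<in> h -` B" using e(2) by blast
    qed
    ultimately show "\<exists>T. open T \<and> x \<in> T \<and> T \<subseteq> h -` B" by blast
  qed
  then show ?thesis by (simp add: continuous_on_open_vimage[OF open_UNIV])
qed

subsection \<open>Separation of a point from a closed convex set\<close>

lemma lcs_open_set_plus:
  fixes A V :: "'a::{real_vector,topological_space} set"
  assumes L: "lcs TYPE('a)" and V: "open V"
  shows "open (A + V)"
proof -
  have eq: "A + V = (\<Union>a\<in>A. {u. 1 *\<^sub>R u + (- a) \<in> V})"
    by (auto simp: set_plus_def) (metis add.commute diff_add_cancel)
  show ?thesis unfolding eq by (intro open_UN ballI lcs_open_affine[OF L V])
qed

text \<open>The convex neighbourhood W = (D - d0) + V of 0 misses x0 - d0, so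
  Hahn-Banach applied to its Minkowski functional yields the functional, and the room
  provided by V makes the separation strict.\<close>
lemma separation:
  fixes D :: "'a::{real_vector,topological_space} set"
  assumes L: "lcs TYPE('a)" and D: "closed D" "convex D" "d0 \<in> D" and x0: "x0 \<notin> D"
  shows "\<exists>h r. h \<in> dual_space \<and> (\<forall>d\<in>D. h d \<le> r) \<and> r < h x0"
proof -
  define V0 where "V0 = {v. (-1) *\<^sub>R v + x0 \<in> - D}"
  have "open V0" unfolding V0_def using D(1) by (intro lcs_open_affine[OF L]) auto
  moreover have "0 \<in> V0" unfolding V0_def using x0 by simp
  ultimately obtain V where V: "open V" "convex V" "0 \<in> V" "V \<subseteq> V0"
    using L unfolding lcs_def by blast
  define W where "W = (\<lambda>d. d - d0) ` D + V"
  have Wo: "open W" unfolding W_def by (rule lcs_open_set_plus[OF L V(1)])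
  have Wc: "convex W" unfolding W_def
    by (intro convex_set_plus convex_translation_subtract D(2) V(2))
  have W0: "0 \<in> W" unfolding W_def using D(3) V(3) by (metis add_0 diff_self image_eqI set_plus_intro)
  have memW: "d - d0 + v \<in> W" if "d \<in> D" "v \<in> V" for d v
    unfolding W_def using that by blast
  define y1 where "y1 = x0 - d0"
  have "y1 \<notin> W"
  proof
    assume "y1 \<in> W"
    then obtain d v where dv: "x0 - d0 = d - d0 + v" "d \<in> D" "v \<in> V"
      unfolding W_def y1_def set_plus_def by blast
    then have "(-1) *\<^sub>R v + x0 = d" by (simp add: algebra_simps)
    moreover have "(-1) *\<^sub>R v + x0 \<in> - D" using V(4) dv(3) unfolding V0_def by blast
    ultimately show False using dv(2) by simp
  qed
  have "1 \<le> mink W y1" using mink_less_1_iff[OF L Wo Wc W0, of y1] \<open>y1 \<notin> W\<close> by linarith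
  then obtain h where h: "linear h" "\<And>x. h x \<le> mink W x" "1 \<le> h y1"
    using hahn_banach_point[OF mink_sublin[OF L Wo Wc W0]] by blast
  have hd: "h \<in> dual_space"
    unfolding dual_space_def using mink_dominated_continuous[OF L Wo Wc W0 h(1) h(2)] h(1) by simp
  obtain s where s: "s > 0" "s *\<^sub>R y1 \<in> V" using lcs_absorb[OF L V(1) V(3)] by blast
  have "h d < 1 + h d0 - s" if d: "d \<in> D" for d
  proof -
    have "h (d - d0 + s *\<^sub>R y1) < 1" using memW[OF d s(2)] h(2) mink_less_1_iff[OF L Wo Wc W0] by (meson le_less_trans)
    then have "h d - h d0 + s * h y1 < 1" using h(1) by (simp add: linear_add linear_diff linear_cmul)
    moreover have "s \<le> s * h y1" using s(1) h(3) by simp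
    ultimately show ?thesis by linarith
  qed
  moreover have "h x0 = h y1 + h d0" unfolding y1_def using h(1) by (simp add: linear_diff)
  ultimately show ?thesis using hd s(1) h(3)
    by (intro exI[of _ h] exI[of _ "1 + h d0 - s"]) force
qed

lemma nonzero_dual_exists:
  fixes x0 :: "'a::{real_vector,t1_space}"
  assumes L: "lcs TYPE('a)" and x0: "x0 \<noteq> 0"
  shows "\<exists>h::'a \<Rightarrow> real. h \<in> dual_space - {\<lambda>_. 0}"
proof -
  have "x0 \<notin> {0}" using x0 by simp
  from separation[OF L closed_singleton convex_singleton singletonI this]
  obtain h r where h: "h \<in> dual_space" "h 0 \<le> r" "r < h x0" by auto
  then have "h \<noteq> (\<lambda>_. 0)" by force
  then show ?thesis using h(1) by blast
qed

subsection \<open>Improper closed convex set-valued maps\<close>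

text \<open>A point w missing from g y would be missed near y on the
  segment towards x1 by closedness, yet hit there by convexity, as g x1 contains the
  arbitrarily far point w1.\<close>
lemma univ_value_spreads:
  fixes g :: "'x::{real_vector,topological_space} \<Rightarrow> 'z::{real_vector,topological_space} set"
  assumes L: "lcs TYPE('x)" and cl: "closed (graph g)" and cv: "convex (graph g)"
    and x1: "g x1 = UNIV" and z: "z \<in> g y"
  shows "g y = UNIV"
proof (rule ccontr)
  assume "g y \<noteq> UNIV"
  then obtain w where w: "w \<notin> g y" by blast
  define f where "f t = ((1 - t) *\<^sub>R x1 + t *\<^sub>R y, w)" for t :: real
  have fc: "continuous_on UNIV f" unfolding f_def
    by (intro continuous_on_Pair lcs_cont_add[OF L] lcs_cont_scale[OF L] continuous_intros)
  have "open (f -` (- graph g))" using cl by (intro open_vimage fc) auto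
  moreover have "1 \<in> f -` (- graph g)" using w unfolding f_def graph_def by simp
  ultimately obtain e where e: "e > 0" "ball 1 e \<subseteq> f -` (- graph g)"
    using open_contains_ball by blast
  define t where "t = 1 - min (e/2) (1/2)"
  have t: "0 < t" "t < 1" "t \<in> ball 1 e" using e(1) unfolding t_def by (auto simp: dist_real_def)
  define w1 where "w1 = (1/(1-t)) *\<^sub>R (w - t *\<^sub>R z)"
  have "(1 - t) *\<^sub>R (x1, w1) + t *\<^sub>R (y, z) \<in> graph g"
    using t x1 z by (intro convexD[OF cv]) (auto simp: graph_def)
  moreover have "(1 - t) *\<^sub>R (x1, w1) + t *\<^sub>R (y, z) = f t"
  proof -
    have "(1 - t) *\<^sub>R w1 = w - t *\<^sub>R z" unfolding w1_def using t by simp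
    then show ?thesis unfolding f_def by simp
  qed
  moreover have "f t \<notin> graph g" using e(2) t(3) by blast
  ultimately show False by simp
qed

lemma improper_values:
  fixes g :: "'x::{real_vector,topological_space} \<Rightarrow> 'z::{real_vector,topological_space} set"
  assumes L: "lcs TYPE('x)" and cl: "closed (graph g)" and cv: "convex (graph g)"
    and improper: "\<not> proper_sv g"
  shows "g y = {} \<or> g y = UNIV"
proof (cases "dom_sv g = {}")
  case True then show ?thesis unfolding dom_sv_def by auto
next
  case False
  then obtain x1 where "g x1 = UNIV" using improper unfolding proper_sv_def by blast
  then show ?thesis using univ_value_spreads[OF L cl cv] by blast
qed

text \<open>The domain of such a map is the slice of the graph at 0, hence closed and convex.\<close>
lemma improper_dom_closed_convex:
  fixes g :: "'x::{real_vector,topological_space} \<Rightarrow> 'z::{real_vector,topological_space} set"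
  assumes L: "lcs TYPE('x)" and cl: "closed (graph g)" and cv: "convex (graph g)"
    and improper: "\<not> proper_sv g"
  shows "closed (dom_sv g)" "convex (dom_sv g)"
proof -
  have dom_eq: "dom_sv g = (\<lambda>y. (y, 0::'z)) -` graph g"
    using improper_values[OF L cl cv improper] unfolding dom_sv_def graph_def by auto
  show "closed (dom_sv g)" unfolding dom_eq
    by (intro closed_vimage cl continuous_on_Pair continuous_on_id continuous_on_const)
  show "convex (dom_sv g)" unfolding dom_eq
    by (rule convex_linear_vimage[OF _ cv]) (simp add: linear_iff)
qed

lemma conaff_Hat: "conaff (Hat h) r zs y = (if h y \<le> r then UNIV else {})"
  unfolding conaff_def by auto

text \<open>Every point outside the domain is cut off by a conaffine minorant with a non-zero
  hat functional: separate it from the domain, or take any non-zero functional if the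
  domain is empty.\<close>
lemma improper_hat_minorant:
  fixes g :: "'x::{real_vector,t1_space} \<Rightarrow> 'z::{real_vector,topological_space} set"
  assumes L: "lcs TYPE('x)" and nontriv: "\<exists>x::'x. x \<noteq> 0"
    and cl: "closed (graph g)" and cv: "convex (graph g)" and improper: "\<not> proper_sv g"
    and x: "x \<notin> dom_sv g"
  shows "\<exists>h r. h \<in> dual_space - {\<lambda>_. 0} \<and> (\<forall>y. g y \<subseteq> conaff (Hat h) r zs y) \<and> r < h x"
proof (cases "dom_sv g = {}")
  case True
  obtain x0 :: 'x where "x0 \<noteq> 0" using nontriv by blast
  then obtain h :: "'x \<Rightarrow> real" where h: "h \<in> dual_space - {\<lambda>_. 0}" using nonzero_dual_exists[OF L] by blast
  have "\<forall>y. g y \<subseteq> conaff (Hat h) (h x - 1) zs y"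
    using True unfolding dom_sv_def by simp
  then show ?thesis using h by (intro exI[of _ h] exI[of _ "h x - 1"]) simp
next
  case False
  then obtain d0 where d0: "d0 \<in> dom_sv g" by blast
  obtain h r where h: "h \<in> dual_space" "\<forall>d\<in>dom_sv g. h d \<le> r" "r < h x"
    using separation[OF L improper_dom_closed_convex[OF L cl cv improper] d0 x] by blast
  have "h d0 < h x" using h(2,3) d0 by fastforce
  then have "h \<in> dual_space - {\<lambda>_. 0}" using h(1) by auto
  moreover have "\<forall>y. g y \<subseteq> conaff (Hat h) r zs y"
  proof
    fix y show "g y \<subseteq> conaff (Hat h) r zs y"
    proof (cases "y \<in> dom_sv g")
      case True then show ?thesis using h(2) by (simp add: conaff_Hat)
    next
      case False then show ?thesis by (simp add: dom_sv_def)
    qed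
  qed
  ultimately show ?thesis using h(3) by blast
qed

theorem mainTheorem18:
  fixes C :: "'z::{real_vector,t2_space} set"
    and g :: "'x::{real_vector,t2_space} \<Rightarrow> 'z set"
  assumes X_lcs: "lcs TYPE('x)"
    and Z_lcs: "lcs TYPE('z)"
    and X_nontriv: "\<exists>x::'x. x \<noteq> 0"
    and C_cone: "convex_cone C"
    and C_neg: "neg_dual_cone C \<noteq> {\<lambda>_. 0}"
    and g_Q: "\<forall>x. g x \<in> Qtri C"
    and g_improper: "\<not> proper_sv g"
    and g_closed: "closed (graph g)"
    and g_convex: "convex (graph g)"
  shows "(\<forall>x. g x = \<Inter> {conaff (Hat xs) r zs x | xs r zs.
              xs \<in> dual_space \<and> zs \<in> neg_dual_cone C - {\<lambda>_. 0} \<and>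
              (\<forall>y. g y \<subseteq> conaff (Hat xs) r zs y)})
       \<and> ((\<exists>x. g x \<noteq> UNIV) \<longrightarrow>
          (\<exists>xs zs r. xs \<in> dual_space - {\<lambda>_. 0} \<and> zs \<in> neg_dual_cone C - {\<lambda>_. 0} \<and>
             (\<forall>x. g x \<subseteq> conaff (Hat xs) r zs x)))"
proof -
  have "(\<lambda>_. 0) \<in> neg_dual_cone C"
    unfolding neg_dual_cone_def dual_space_def by (simp add: linear_zero)
  then obtain zs where zs: "zs \<in> neg_dual_cone C - {\<lambda>_. 0}" using C_neg by blast
  note trivial_values = improper_values[OF X_lcs g_closed g_convex g_improper]
  note minorant = improper_hat_minorant[OF X_lcs X_nontriv g_closed g_convex g_improper, where zs = zs]
  have off_dom: "x \<notin> dom_sv g" if "g x \<noteq> UNIV" for x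
    using trivial_values[of x] that unfolding dom_sv_def by auto
  have intersection_repr: "g x = \<Inter> {conaff (Hat xs) r zs x | xs r zs. xs \<in> dual_space \<and>
      zs \<in> neg_dual_cone C - {\<lambda>_. 0} \<and> (\<forall>y. g y \<subseteq> conaff (Hat xs) r zs y)}" for x
  proof (cases "g x = UNIV")
    case True then show ?thesis by blast
  next
    case False
    then obtain h r where h: "h \<in> dual_space" "\<forall>y. g y \<subseteq> conaff (Hat h) r zs y" "r < h x"
      using minorant[OF off_dom] by blast
    have "conaff (Hat h) r zs x \<in> {conaff (Hat xs) r zs x | xs r zs. xs \<in> dual_space \<and>
        zs \<in> neg_dual_cone C - {\<lambda>_. 0} \<and> (\<forall>y. g y \<subseteq> conaff (Hat xs) r zs y)}"
      using h zs by blast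
    moreover have "conaff (Hat h) r zs x = {}" using h(3) unfolding conaff_Hat by simp
    moreover have "g x = {}" using trivial_values[of x] False by blast
    ultimately show ?thesis by blast
  qed
  have nonzero_minorant: "\<exists>xs zs r. xs \<in> dual_space - {\<lambda>_. 0} \<and> zs \<in> neg_dual_cone C - {\<lambda>_. 0} \<and>
      (\<forall>x. g x \<subseteq> conaff (Hat xs) r zs x)" if "g x \<noteq> UNIV" for x
    using minorant[OF off_dom[OF that]] zs by blast
  show ?thesis using intersection_repr nonzero_minorant by blast
qed

end
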